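(* Let $G$ be a matrix Lie group with Lie algebra $\mathfrak{g}$ of dimension $n$. Let $X(t),\bar X(t)\in G$ be differentiable and satisfy $$\dot X = X[l]^\wedge + [r]^\wedge X,\qquad \dot{\bar X} = \bar X[\bar l]^\wedge + [\bar r]^\wedge \bar X,$$ where $l,r,\bar l,\bar r:\mathbb{R}\to\mathbb{R}^n$ are (possibly time-varying) inputs, and write $l=\bar l+u_l$, $r=\bar r+u_r$. Define the left-invariant error $\eta_l = X^{-1}\bar X$ and suppose $\eta_l(t)=\exp([\zeta_l(t)]^\wedge)$ for a differentiable curve $\zeta_l(t)\in\mathbb{R}^n$ such that the linear map $\sum_{k\ge 0}\frac{(-1)^k}{(k+1)!}(ad_{[\zeta_l]^\wedge})^k$ is invertible (equivalently, $ad_{[\zeta_l]^\wedge}$ has no eigenvalue in $2\pi i\mathbb{Z}\setminus\{0\}$). Then $$\dot\zeta_l = -ad_{[\bar l]^\wedge}\,\zeta_l + U_l\,\big(u_l + Ad_{X^{-1}}u_r\big),\qquad U_l \equiv -\frac{ad_{[\zeta_l]^\wedge}\exp(-ad_{[\zeta_l]^\wedge})}{I-\exp(-ad_{[\zeta_l]^\wedge})},$$ and $U_l$ is invertible with $$U_l^{-1} = -\sum_{k=0}^{\infty}\frac{(ad_{[\zeta_l]^\wedge})^k}{(k+1)!}.$$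
   Context: $[\cdot]^\wedge:\mathbb{R}^n\to\mathfrak{g}$ is a fixed linear isomorphism (the "wedge" map) with inverse $[\cdot]^\vee$. For $\zeta\in\mathbb{R}^n$, $ad_{[\zeta]^\wedge}$ denotes the $n\times n$ matrix of the linear map $y\mapsto\big([\zeta]^\wedge[y]^\wedge-[y]^\wedge[\zeta]^\wedge\big)^\vee$. For $X\in G$, $Ad_X$ denotes the $n\times n$ matrix of $y\mapsto (X[y]^\wedge X^{-1})^\vee$. $\exp$ is the matrix exponential. Expressions such as $\frac{ad\,\exp(-ad)}{I-\exp(-ad)}$ are understood as the matrix functions defined via power series in $ad_{[\zeta_l]^\wedge}$ (all such factors commute); in particular $\frac{I-\exp(-ad)}{ad}=\sum_{k\ge0}\frac{(-1)^k}{(k+1)!}ad^k$ and $\frac{ad}{I-\exp(-ad)}$ is its inverse. *)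

theory Defs
  imports "HOL-Analysis.Analysis"
begin

definition mpow :: "real^'m^'m \<Rightarrow> nat \<Rightarrow> real^'m^'m" where
  "mpow A k = ((\<lambda>B. A ** B) ^^ k) (mat 1)"

definition mexp :: "real^'m^'m \<Rightarrow> real^'m^'m" where
  "mexp A = (\<Sum>k. (1 / fact k) *\<^sub>R mpow A k)"

definition matrix_Lie_group :: "(real^'m^'m) set \<Rightarrow> bool" where
  "matrix_Lie_group G \<longleftrightarrow>
     G \<subseteq> {A. invertible A} \<and> mat 1 \<in> G \<and>
     (\<forall>A\<in>G. \<forall>B\<in>G. A ** B \<in> G) \<and> (\<forall>A\<in>G. matrix_inv A \<in> G) \<and>
     closedin (top_of_set {A. invertible A}) G"

definition lie_algebra :: "(real^'m^'m) set \<Rightarrow> (real^'m^'m) set" where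
  "lie_algebra G = {A. \<forall>t::real. mexp (t *\<^sub>R A) \<in> G}"

definition wedge_map :: "(real^'m^'m) set \<Rightarrow> (real^'n \<Rightarrow> real^'m^'m) \<Rightarrow> bool" where
  "wedge_map G W \<longleftrightarrow> linear W \<and> inj W \<and> range W = lie_algebra G"

definition vee :: "(real^'n \<Rightarrow> real^'m^'m) \<Rightarrow> real^'m^'m \<Rightarrow> real^'n" where
  "vee W A = inv W A"

definition ad_mat :: "(real^'n \<Rightarrow> real^'m^'m) \<Rightarrow> real^'n \<Rightarrow> real^'n^'n" where
  "ad_mat W z = matrix (\<lambda>y. vee W (W z ** W y - W y ** W z))"

definition Ad_mat :: "(real^'n \<Rightarrow> real^'m^'m) \<Rightarrow> real^'m^'m \<Rightarrow> real^'n^'n" where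
  "Ad_mat W X = matrix (\<lambda>y. vee W (X ** W y ** matrix_inv X))"

text \<open>(I - exp(-ad))/ad = sum_k (-1)^k/(k+1)! ad^k.\<close>

definition dexp_series :: "(real^'n \<Rightarrow> real^'m^'m) \<Rightarrow> real^'n \<Rightarrow> real^'n^'n" where
  "dexp_series W z = (\<Sum>k. ((-1) ^ k / fact (k + 1)) *\<^sub>R mpow (ad_mat W z) k)"

text \<open>U_l = - ad exp(-ad)/(I - exp(-ad)) = - exp(-ad) (ad/(I-exp(-ad))),
  where ad/(I-exp(-ad)) is the inverse of dexp_series.\<close>

definition U_mat :: "(real^'n \<Rightarrow> real^'m^'m) \<Rightarrow> real^'n \<Rightarrow> real^'n^'n" where
  "U_mat W z = - (mexp (- ad_mat W z) ** matrix_inv (dexp_series W z))"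

end

theory Submission
  imports Defs
begin

text \<open>
  In a Banach algebra the derivative of \<open>exp\<close> at \<open>A\<close> is \<open>B \<mapsto> exp A \<cdot> dexp A B\<close> with
  \<open>dexp A = (1 - exp (- ad A)) / ad A\<close>; this follows by comparing \<open>exp (- s A) exp (s (A + B))\<close>
  with a power series in \<open>s\<close>, and \<open>exp (- A) B exp A = exp (- ad A) B\<close> is proved the same way.
  Differentiating \<open>X\<^sub>b = X exp \<zeta>\<^sub>l\<close> by the product rule and inserting both equations of motion gives
  \<open>dexp \<zeta>\<^sub>l \<zeta>\<^sub>l' = l\<^sub>b - exp (- ad \<zeta>\<^sub>l) (l + Ad\<^bsub>X\<^sup>-\<^sup>1\<^esub> (r - r\<^sub>b))\<close>. As \<open>dexp \<zeta>\<^sub>l \<cdot> ad \<zeta>\<^sub>l = 1 - exp (- ad \<zeta>\<^sub>l)\<close>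
  and \<open>dexp \<zeta>\<^sub>l\<close> commutes with \<open>exp (- ad \<zeta>\<^sub>l)\<close>, solving for \<open>\<zeta>\<^sub>l'\<close> yields the stated equation, with
  \<open>ad \<zeta>\<^sub>l l\<^sub>b = - ad l\<^sub>b \<zeta>\<^sub>l\<close> by antisymmetry. The inverse of \<open>U\<^sub>l\<close> comes from the identity
  \<open>exprel (- x) exp x = exprel x\<close> for \<open>exprel x = (exp x - 1) / x\<close>.
\<close>

section \<open>The Banach algebra of endomorphisms\<close>

text \<open>Matrix product is not the \<open>*\<close> of \<open>real^'m^'m\<close>, so the library's \<open>exp\<close> cannot be
  applied to matrices directly. Instead matrices are transferred to the bounded linear
  endomorphisms of \<open>real^'m\<close>, made into a Banach algebra under composition.\<close>

typedef (overloaded) 'a endo = "UNIV :: ('a::euclidean_space \<Rightarrow>\<^sub>L 'a) set"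
  by auto

instantiation endo :: (euclidean_space) real_normed_algebra_1
begin

definition "0 = Abs_endo 0"
definition "a + b = Abs_endo (Rep_endo a + Rep_endo b)"
definition "a - b = Abs_endo (Rep_endo a - Rep_endo b)"
definition "- a = Abs_endo (- Rep_endo a)"
definition "r *\<^sub>R a = Abs_endo (r *\<^sub>R Rep_endo a)"
definition "a * b = Abs_endo (Rep_endo a o\<^sub>L Rep_endo b)"
definition "1 = Abs_endo id_blinfun"
definition "norm a = norm (Rep_endo a)"
definition "dist a b = norm (a - (b::'a endo))"
definition "sgn a = inverse (norm a) *\<^sub>R (a::'a endo)"
definition "uniformity = (INF e\<in>{0<..}. principal {(x, y::'a endo). dist x y < e})"
definition "open U = (\<forall>x\<in>U. \<forall>\<^sub>F (x', y) in uniformity. x' = x \<longrightarrow> y \<in> (U::'a endo set))"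

lemma Rep_endo_simps:
  "Rep_endo 0 = 0" "Rep_endo (a + b) = Rep_endo a + Rep_endo b"
  "Rep_endo (a - b) = Rep_endo a - Rep_endo b" "Rep_endo (- a) = - Rep_endo a"
  "Rep_endo (r *\<^sub>R a) = r *\<^sub>R Rep_endo a" "Rep_endo (a * b) = Rep_endo a o\<^sub>L Rep_endo b"
  "Rep_endo 1 = id_blinfun" "norm a = norm (Rep_endo a)"
  by (simp_all add: zero_endo_def plus_endo_def minus_endo_def uminus_endo_def scaleR_endo_def
      times_endo_def one_endo_def norm_endo_def Abs_endo_inverse)

lemma id_blinfun_neq_zero: "(id_blinfun :: 'a \<Rightarrow>\<^sub>L 'a) \<noteq> 0"
proof
  assume "(id_blinfun :: 'a \<Rightarrow>\<^sub>L 'a) = 0"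
  moreover obtain b :: 'a where "b \<in> Basis" using nonempty_Basis by blast
  ultimately show False using nonzero_Basis by (metis blinfun.zero_left id_blinfun.rep_eq id_apply)
qed

instance
  by standard (auto simp: Rep_endo_inject[symmetric] Rep_endo_simps dist_endo_def sgn_endo_def
      uniformity_endo_def open_endo_def algebra_simps norm_triangle_ineq norm_blinfun_compose
      blinfun.bilinear_simps id_blinfun_neq_zero intro!: blinfun_eqI)

end

lemma dist_endo: "dist a b = dist (Rep_endo a) (Rep_endo b)"
  by (simp add: dist_endo_def Rep_endo_simps dist_norm)

instance endo :: (euclidean_space) banach
proof
  fix X :: "nat \<Rightarrow> 'a endo"
  assume "Cauchy X"
  hence "Cauchy (\<lambda>n. Rep_endo (X n))" unfolding Cauchy_def dist_endo .
  then obtain L where "(\<lambda>n. Rep_endo (X n)) \<longlonglongrightarrow> L" using Cauchy_convergent_iff convergent_def by blast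
  hence "X \<longlonglongrightarrow> Abs_endo L"
    unfolding lim_sequentially dist_endo by (simp add: Abs_endo_inverse)
  thus "convergent X" by (auto simp: convergent_def)
qed

definition endo_of_mat :: "real^'m^'m \<Rightarrow> (real^'m) endo" where
  "endo_of_mat A = Abs_endo (Blinfun (\<lambda>x. A *v x))"

definition mat_of_endo :: "(real^'m) endo \<Rightarrow> real^'m^'m" where
  "mat_of_endo T = matrix (blinfun_apply (Rep_endo T))"

lemma blinfun_apply_endo_of_mat: "blinfun_apply (Rep_endo (endo_of_mat A)) = (\<lambda>x. A *v x)"
  by (simp add: endo_of_mat_def Abs_endo_inverse bounded_linear_Blinfun_apply
      matrix_vector_mul_bounded_linear)

lemma mat_of_endo_inverse [simp]: "mat_of_endo (endo_of_mat A) = A"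
  by (simp add: mat_of_endo_def blinfun_apply_endo_of_mat)

lemma endo_of_mat_inverse [simp]: "endo_of_mat (mat_of_endo T) = T"
  by (simp add: endo_of_mat_def mat_of_endo_def matrix_works blinfun_apply_inverse
      Rep_endo_inverse bounded_linear.linear[OF blinfun.bounded_linear_right])

lemma endo_of_mat_inject: "endo_of_mat A = endo_of_mat B \<Longrightarrow> A = B"
  by (metis mat_of_endo_inverse)

lemma endo_of_mat_eq_iff: "endo_of_mat A = endo_of_mat B \<longleftrightarrow> A = B"
  by (metis mat_of_endo_inverse)

lemma endo_of_mat_mult: "endo_of_mat (A ** B) = endo_of_mat A * endo_of_mat B"
  by (simp add: Rep_endo_inject[symmetric] Rep_endo_simps blinfun_apply_endo_of_mat
      blinfun_apply_inject[symmetric] fun_eq_iff matrix_vector_mul_assoc)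

lemma endo_of_mat_one: "endo_of_mat (mat 1) = 1"
  by (simp add: Rep_endo_inject[symmetric] Rep_endo_simps blinfun_apply_endo_of_mat
      blinfun_apply_inject[symmetric] fun_eq_iff)

lemma linear_endo_of_mat: "linear endo_of_mat"
  by (rule linearI) (simp_all add: Rep_endo_inject[symmetric] Rep_endo_simps blinfun_apply_endo_of_mat
      blinfun_apply_inject[symmetric] fun_eq_iff matrix_vector_mult_add_rdistrib
      scaleR_matrix_vector_assoc blinfun.bilinear_simps)

lemma bounded_linear_endo_of_mat: "bounded_linear endo_of_mat"
  using linear_endo_of_mat linear_conv_bounded_linear by blast

lemmas endo_of_mat_add = linear_add[OF linear_endo_of_mat]
   and endo_of_mat_diff = linear_diff[OF linear_endo_of_mat]
   and endo_of_mat_minus = linear_neg[OF linear_endo_of_mat]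
   and endo_of_mat_scaleR = linear_scale[OF linear_endo_of_mat]

lemmas endo_of_mat_simps =
  endo_of_mat_mult endo_of_mat_one endo_of_mat_add endo_of_mat_diff endo_of_mat_minus endo_of_mat_scaleR

lemma mat_of_endo_nth: "mat_of_endo T $ i $ j = Rep_endo T (axis j 1) $ i"
  by (simp add: mat_of_endo_def matrix_def)

lemma norm_mat_of_endo_le: "norm (mat_of_endo (T::(real^'m) endo)) \<le> norm T * (CARD('m) * CARD('m))"
proof -
  have entry: "\<bar>mat_of_endo T $ i $ j\<bar> \<le> norm T" for i j
  proof -
    have "\<bar>mat_of_endo T $ i $ j\<bar> \<le> norm (Rep_endo T (axis j 1))"
      unfolding mat_of_endo_nth by (rule component_le_norm_cart)
    also have "\<dots> \<le> norm (Rep_endo T) * norm (axis j (1::real))" by (rule norm_blinfun)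
    finally show ?thesis by (simp add: Rep_endo_simps)
  qed
  have "norm (mat_of_endo T) \<le> (\<Sum>i\<in>UNIV. norm (mat_of_endo T $ i))"
    by (simp add: norm_vec_def L2_set_le_sum)
  also have "\<dots> \<le> (\<Sum>i\<in>(UNIV::'m set). \<Sum>j\<in>(UNIV::'m set). norm T)"
    by (intro sum_mono order_trans[OF norm_le_l1_cart] entry)
  finally show ?thesis by (simp add: mult_ac)
qed

lemma bounded_linear_mat_of_endo: "bounded_linear (mat_of_endo :: (real^'m) endo \<Rightarrow> _)"
proof (rule bounded_linear_intro[of _ "CARD('m) * CARD('m)"])
  show "mat_of_endo (S + T) = mat_of_endo S + mat_of_endo T"
    and "mat_of_endo (r *\<^sub>R T) = r *\<^sub>R mat_of_endo T" for S T :: "(real^'m) endo" and r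
    by (simp_all add: vec_eq_iff mat_of_endo_nth Rep_endo_simps blinfun.bilinear_simps)
qed (rule norm_mat_of_endo_le)

lemma has_vector_derivative_endo_of_mat:
  "(X has_vector_derivative X') F \<Longrightarrow> ((\<lambda>s. endo_of_mat (X s)) has_vector_derivative endo_of_mat X') F"
  by (rule bounded_linear.has_vector_derivative[OF bounded_linear_endo_of_mat])

lemma summable_endo_of_mat_iff: "summable (\<lambda>k. endo_of_mat (f k)) \<longleftrightarrow> summable f"
proof
  assume "summable (\<lambda>k. endo_of_mat (f k))"
  from bounded_linear.summable[OF bounded_linear_mat_of_endo this] show "summable f" by simp
qed (rule bounded_linear.summable[OF bounded_linear_endo_of_mat])

lemma endo_of_mat_suminf:
  "summable f \<Longrightarrow> endo_of_mat (suminf f) = (\<Sum>k. endo_of_mat (f k))"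
  by (rule bounded_linear.suminf[OF bounded_linear_endo_of_mat])

lemma mpow_0 [simp]: "mpow A 0 = mat 1"
  by (simp add: mpow_def)

lemma mpow_Suc: "mpow A (Suc k) = A ** mpow A k"
  by (simp add: mpow_def)

lemma endo_of_mat_mpow: "endo_of_mat (mpow A k) = endo_of_mat A ^ k"
  by (induction k) (simp_all add: mpow_Suc endo_of_mat_simps)

lemma summable_mexp: "summable (\<lambda>k. (1 / fact k) *\<^sub>R mpow A k)"
  unfolding summable_endo_of_mat_iff[symmetric]
  using summable_exp_generic[of "endo_of_mat A"]
  by (simp add: endo_of_mat_simps endo_of_mat_mpow inverse_eq_divide)

section \<open>Calculus of curves in Banach spaces\<close>

lemma norm_diff_le_vector_derivative_bound:
  fixes f :: "real \<Rightarrow> 'b::real_normed_vector"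
  assumes "\<And>x. x \<in> {a..b} \<Longrightarrow> (f has_vector_derivative f' x) (at x within {a..b})"
    and "\<And>x. x \<in> {a..b} \<Longrightarrow> norm (f' x) \<le> B" and "a \<le> b"
  shows "norm (f b - f a) \<le> B * (b - a)"
proof -
  have "norm (f b - f a) \<le> B * norm (b - a)"
  proof (rule differentiable_bound[of "{a..b}" f "\<lambda>x h. h *\<^sub>R f' x"])
    show "(f has_derivative (\<lambda>h. h *\<^sub>R f' x)) (at x within {a..b})" if "x \<in> {a..b}" for x
      using assms(1)[OF that] by (simp add: has_vector_derivative_def)
    show "onorm (\<lambda>h. h *\<^sub>R f' x) \<le> B" if "x \<in> {a..b}" for x
      using assms(2)[OF that] by (intro onorm_le) (metis abs_ge_zero mult.commute mult_left_mono norm_scaleR real_norm_def)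
  qed (use assms(3) in auto)
  thus ?thesis using assms(3) by simp
qed

lemma bounded_linear_suminf:
  fixes c :: "nat \<Rightarrow> 'a::real_normed_vector \<Rightarrow> 'b::banach"
  assumes "\<And>k. bounded_linear (c k)" and "\<And>k x. norm (c k x) \<le> M k * norm x" and "summable M"
  shows "bounded_linear (\<lambda>x. \<Sum>k. c k x)"
proof -
  have norm_summable: "summable (\<lambda>k. norm (c k x))" for x
    by (rule summable_comparison_test[of _ "\<lambda>k. M k * norm x"])
      (use assms(2,3) summable_mult2 in auto)
  note summable = summable_norm_cancel[OF norm_summable]
  note lin = bounded_linear.linear[OF assms(1)]
  show ?thesis
  proof (rule bounded_linear_intro[of _ "\<Sum>k. M k"])
    show "(\<Sum>k. c k (x + y)) = (\<Sum>k. c k x) + (\<Sum>k. c k y)" for x y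
      by (simp add: linear_add[OF lin] suminf_add[OF summable summable])
    show "(\<Sum>k. c k (r *\<^sub>R x)) = r *\<^sub>R (\<Sum>k. c k x)" for r x
      by (simp add: linear_scale[OF lin] suminf_scaleR_right[OF summable])
    show "norm (\<Sum>k. c k x) \<le> norm x * (\<Sum>k. M k)" for x
    proof -
      have "norm (\<Sum>k. c k x) \<le> (\<Sum>k. M k * norm x)"
        by (rule order_trans[OF summable_norm[OF norm_summable]
              suminf_le[OF assms(2) norm_summable summable_mult2[OF assms(3)]]])
      thus ?thesis using suminf_mult2[OF assms(3), of "norm x"] by (simp add: mult_ac)
    qed
  qed
qed

lemma summable_exp_bounded:
  fixes f :: "nat \<Rightarrow> 'a::banach"
  assumes "\<And>k. norm (f k) \<le> C * K^k / fact k"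
  shows "summable f"
proof (rule summable_norm_cancel[OF summable_comparison_test[rotated]])
  show "summable (\<lambda>k. C * K^k / fact k)"
    using summable_mult[OF summable_exp[of K], of C] by (simp add: field_simps)
qed (use assms in auto)

lemma uniform_limit_exp_bounded_derivative_series:
  fixes c :: "nat \<Rightarrow> 'a::banach"
  assumes bound: "\<And>k. norm (c k) \<le> C * K^k / fact k" and "K \<ge> 0"
  shows "uniform_limit (cball 0 R) (\<lambda>n s. \<Sum>k<n. s^k *\<^sub>R (Suc k *\<^sub>R c k))
           (\<lambda>s. \<Sum>k. s^k *\<^sub>R (Suc k *\<^sub>R c k)) sequentially"
proof (rule Weierstrass_m_test)
  have "C \<ge> 0" using order_trans[OF norm_ge_zero bound[of 0]] by simp
  show "norm (s^k *\<^sub>R (Suc k *\<^sub>R c k)) \<le> C * (2 * \<bar>R\<bar> * K)^k / fact k" if "s \<in> cball 0 R" for k s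
  proof -
    have "\<bar>s\<bar>^k \<le> \<bar>R\<bar>^k" using that by (intro power_mono) auto
    moreover have "real (Suc k) \<le> 2^k" by (induction k) auto
    from mult_mono[OF this bound] have "real (Suc k) * norm (c k) \<le> 2^k * (C * K^k / fact k)"
      using \<open>C \<ge> 0\<close> \<open>K \<ge> 0\<close> by simp
    ultimately have "\<bar>s\<bar>^k * (real (Suc k) * norm (c k)) \<le> \<bar>R\<bar>^k * (2^k * (C * K^k / fact k))"
      by (rule mult_mono) auto
    thus ?thesis by (simp add: abs_mult power_abs power_mult_distrib mult_ac)
  qed
  show "summable (\<lambda>k. C * (2 * \<bar>R\<bar> * K)^k / fact k)"
    using summable_mult[OF summable_exp[of "2 * \<bar>R\<bar> * K"], of C] by (simp add: field_simps)
qed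

lemma has_vector_derivative_series:
  fixes f f' :: "nat \<Rightarrow> real \<Rightarrow> 'a::banach"
  assumes "open S" and "convex S" and "s0 \<in> S"
    and deriv: "\<And>k s. (f k has_vector_derivative f' k s) (at s within S)"
    and unif: "uniform_limit S (\<lambda>n s. \<Sum>k<n. f' k s) (\<lambda>s. \<Sum>k. f' k s) sequentially"
    and summable: "summable (\<lambda>k. f k s0)"
  shows "((\<lambda>s. \<Sum>k. f k s) has_vector_derivative (\<Sum>k. f' k s0)) (at s0)"
proof -
  have unif_scaled: "\<forall>\<^sub>F n in sequentially. \<forall>s\<in>S. \<forall>h.
      norm ((\<Sum>k<n. h *\<^sub>R f' k s) - h *\<^sub>R (\<Sum>k. f' k s)) \<le> e * norm h" if "e > 0" for e
    using uniform_limitD[OF unif that]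
  proof eventually_elim
    case (elim n)
    have "\<bar>h\<bar> * norm ((\<Sum>k<n. f' k s) - (\<Sum>k. f' k s)) \<le> \<bar>h\<bar> * e" if "s \<in> S" for s h
      using elim that by (intro mult_left_mono) (auto simp: dist_norm)
    thus ?case by (simp add: scaleR_sum_right[symmetric] scaleR_diff_right[symmetric] mult.commute)
  qed
  obtain g where g: "\<forall>s\<in>S. (\<lambda>k. f k s) sums g s
      \<and> (g has_derivative (\<lambda>h. h *\<^sub>R (\<Sum>k. f' k s))) (at s within S)"
    using has_derivative_series[OF \<open>convex S\<close> deriv[unfolded has_vector_derivative_def] unif_scaled
        \<open>s0 \<in> S\<close> summable_sums[OF summable]]
    by auto
  with \<open>s0 \<in> S\<close> \<open>open S\<close> have "(g has_derivative (\<lambda>h. h *\<^sub>R (\<Sum>k. f' k s0))) (at s0)"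
    using at_within_open by metis
  hence "((\<lambda>s. \<Sum>k. f k s) has_derivative (\<lambda>h. h *\<^sub>R (\<Sum>k. f' k s0))) (at s0)"
    by (rule has_derivative_transform_within_open[OF _ \<open>open S\<close> \<open>s0 \<in> S\<close>])
      (use g in \<open>auto simp: sums_iff\<close>)
  thus ?thesis by (simp add: has_vector_derivative_def)
qed

lemma has_vector_derivative_exp_bounded_series:
  fixes c :: "nat \<Rightarrow> 'a::banach"
  assumes bound: "\<And>k. norm (c k) \<le> C * K^k / fact k" and "K \<ge> 0"
  shows "((\<lambda>s. \<Sum>k. s^Suc k *\<^sub>R c k) has_vector_derivative (\<Sum>k. s0^k *\<^sub>R (Suc k *\<^sub>R c k))) (at s0)"
proof (rule has_vector_derivative_series[of "ball s0 1"])
  have "ball s0 1 \<subseteq> cball 0 (\<bar>s0\<bar> + 1)" by (auto simp: dist_real_def)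
  with uniform_limit_exp_bounded_derivative_series[OF assms]
  show "uniform_limit (ball s0 1) (\<lambda>n s. \<Sum>k<n. s^k *\<^sub>R (Suc k *\<^sub>R c k))
      (\<lambda>s. \<Sum>k. s^k *\<^sub>R (Suc k *\<^sub>R c k)) sequentially"
    by (rule uniform_limit_on_subset)
  show "((\<lambda>s. s^Suc k *\<^sub>R c k) has_vector_derivative s^k *\<^sub>R (Suc k *\<^sub>R c k)) (at s within ball s0 1)" for k s
  proof -
    have "((\<lambda>s. s^Suc k *\<^sub>R c k) has_vector_derivative (s^Suc k *\<^sub>R 0 + (Suc k * s^k) *\<^sub>R c k))
        (at s within ball s0 1)"
      by (rule has_vector_derivative_scaleR[OF _ has_vector_derivative_const])
        (use DERIV_pow[of "Suc k" s] in simp)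
    thus ?thesis by (simp add: mult.commute)
  qed
  show "summable (\<lambda>k. s0^Suc k *\<^sub>R c k)"
  proof (rule summable_exp_bounded)
    fix k
    have "norm (s0^Suc k *\<^sub>R c k) = \<bar>s0\<bar> * (\<bar>s0\<bar>^k * norm (c k))"
      by (simp add: abs_mult power_abs)
    also have "\<dots> \<le> \<bar>s0\<bar> * (\<bar>s0\<bar>^k * (C * K^k / fact k))"
      by (intro mult_left_mono bound) auto
    finally show "norm (s0^Suc k *\<^sub>R c k) \<le> (\<bar>s0\<bar> * C) * (\<bar>s0\<bar> * K)^k / fact k"
      by (simp add: power_mult_distrib mult_ac)
  qed
qed auto

lemma has_vector_derivative_zero_constant:
  fixes f :: "real \<Rightarrow> 'a::real_normed_vector"
  assumes "\<And>s. (f has_vector_derivative 0) (at s)"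
  shows "f x = f y"
proof -
  obtain c where "\<forall>s\<in>UNIV. f s = c"
    using has_derivative_zero_constant[of UNIV f] assms by (auto simp: has_vector_derivative_def)
  thus ?thesis by simp
qed

lemma vector_derivative_in_closed_subspace:
  fixes f :: "real \<Rightarrow> 'b::real_normed_vector"
  assumes "closed S" and "subspace S" and "\<And>s. f s \<in> S" and "(f has_vector_derivative f') (at x)"
  shows "f' \<in> S"
proof (rule Lim_in_closed_set[OF assms(1)])
  have "((\<lambda>y. ((f y - f x) - (y - x) *\<^sub>R f') /\<^sub>R norm (y - x)) \<longlongrightarrow> 0) (at x)"
    using assms(4) unfolding has_vector_derivative_def has_derivative_at_within[of _ _ x UNIV] by simp
  hence "((\<lambda>y. norm ((f y - f x) /\<^sub>R (y - x) - f')) \<longlongrightarrow> 0) (at x)"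
  proof (rule Lim_transform_eventually[OF tendsto_norm_zero])
    show "\<forall>\<^sub>F y in at x. norm (((f y - f x) - (y - x) *\<^sub>R f') /\<^sub>R norm (y - x))
        = norm ((f y - f x) /\<^sub>R (y - x) - f')"
    proof (intro eventually_at_filter[THEN iffD2] always_eventually allI impI)
      fix y
      assume "y \<noteq> x"
      hence "(f y - f x) /\<^sub>R (y - x) - f' = (1 / (y - x)) *\<^sub>R ((f y - f x) - (y - x) *\<^sub>R f')"
        by (simp add: scaleR_diff_right inverse_eq_divide)
      thus "norm (((f y - f x) - (y - x) *\<^sub>R f') /\<^sub>R norm (y - x)) = norm ((f y - f x) /\<^sub>R (y - x) - f')"
        by (simp add: divide_inverse abs_inverse)
    qed
  qed
  thus "((\<lambda>y. (f y - f x) /\<^sub>R (y - x)) \<longlongrightarrow> f') (at x)"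
    by (metis Lim_null tendsto_norm_zero_iff)
  show "\<forall>\<^sub>F y in at x. (f y - f x) /\<^sub>R (y - x) \<in> S"
    using assms(2,3) by (intro always_eventually allI) (simp add: subspace_diff subspace_scale)
qed simp

section \<open>The derivative of the exponential in a Banach algebra\<close>

definition ad_iter :: "'a::real_normed_algebra \<Rightarrow> nat \<Rightarrow> 'a \<Rightarrow> 'a" where
  "ad_iter A k = ((\<lambda>Y. A * Y - Y * A) ^^ k)"

lemma ad_iter_0 [simp]: "ad_iter A 0 B = B"
  by (simp add: ad_iter_def)

lemma ad_iter_Suc: "ad_iter A (Suc k) B = A * ad_iter A k B - ad_iter A k B * A"
  by (simp add: ad_iter_def)

lemma norm_ad_iter_le: "norm (ad_iter A k B) \<le> (2 * norm A)^k * norm B"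
proof (induction k)
  case (Suc k)
  have "norm (ad_iter A (Suc k) B) \<le> norm A * norm (ad_iter A k B) + norm (ad_iter A k B) * norm A"
    unfolding ad_iter_Suc by (rule order_trans[OF norm_triangle_ineq4 add_mono[OF norm_mult_ineq norm_mult_ineq]])
  also have "\<dots> \<le> 2 * norm A * ((2 * norm A)^k * norm B)"
    using mult_left_mono[OF Suc, of "2 * norm A"] by simp
  finally show ?case by (simp add: mult_ac)
qed simp

lemma bounded_linear_ad_iter: "bounded_linear (ad_iter A k)"
proof (induction k)
  case 0
  show ?case by (simp add: ad_iter_def bounded_linear_ident[unfolded id_def])
next
  case (Suc k)
  have "bounded_linear (\<lambda>B. A * ad_iter A k B - ad_iter A k B * A)"
    by (intro bounded_linear_sub bounded_linear_compose[OF bounded_linear_mult_right Suc]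
        bounded_linear_compose[OF bounded_linear_mult_left Suc])
  thus ?case by (simp add: ad_iter_Suc[abs_def])
qed

definition Ad_exp_term :: "'a::real_normed_algebra \<Rightarrow> 'a \<Rightarrow> nat \<Rightarrow> 'a" where
  "Ad_exp_term A B k = ((-1)^k / fact k) *\<^sub>R ad_iter A k B"

definition dexp_term :: "'a::real_normed_algebra \<Rightarrow> 'a \<Rightarrow> nat \<Rightarrow> 'a" where
  "dexp_term A B k = ((-1)^k / fact (Suc k)) *\<^sub>R ad_iter A k B"

text \<open>The left trivialized differential of \<open>exp\<close>: \<open>(1 - exp (- ad A)) / ad A\<close> applied to \<open>B\<close>.\<close>

definition dexp :: "'a::{real_normed_algebra,banach} \<Rightarrow> 'a \<Rightarrow> 'a" where
  "dexp A B = (\<Sum>k. dexp_term A B k)"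

lemma norm_Ad_exp_term_le: "norm (Ad_exp_term A B k) \<le> norm B * (2 * norm A)^k / fact k"
  using divide_right_mono[OF norm_ad_iter_le[of A k B], of "fact k"]
  by (simp add: Ad_exp_term_def mult_ac)

lemma norm_dexp_term_le: "norm (dexp_term A B k) \<le> norm B * (2 * norm A)^k / fact k"
proof -
  have "norm (dexp_term A B k) \<le> norm (Ad_exp_term A B k)"
    by (simp add: dexp_term_def Ad_exp_term_def divide_left_mono fact_mono)
  thus ?thesis using norm_Ad_exp_term_le by (rule order_trans)
qed

lemma Suc_scaleR_dexp_term: "Suc k *\<^sub>R dexp_term A B k = Ad_exp_term A B k"
proof -
  have "real (Suc k) * ((-1)^k / fact (Suc k)) = ((-1)^k / fact k :: real)"
    by (simp add: fact_Suc field_simps del: of_nat_Suc)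
  thus ?thesis by (simp add: dexp_term_def Ad_exp_term_def)
qed

lemma Suc_scaleR_Ad_exp_term:
  "Suc k *\<^sub>R Ad_exp_term A B (Suc k) = - (A * Ad_exp_term A B k - Ad_exp_term A B k * A)"
proof -
  have "real (Suc k) * ((-1)^Suc k / fact (Suc k)) = - ((-1)^k / fact k :: real)"
    by (simp add: fact_Suc field_simps del: of_nat_Suc)
  thus ?thesis by (simp add: Ad_exp_term_def ad_iter_Suc algebra_simps)
qed

lemma summable_Ad_exp_series:
  fixes A :: "'a::{real_normed_algebra,banach}"
  shows "summable (\<lambda>k. s^k *\<^sub>R Ad_exp_term A B k)"
proof (rule summable_exp_bounded)
  show "norm (s^k *\<^sub>R Ad_exp_term A B k) \<le> norm B * (\<bar>s\<bar> * (2 * norm A))^k / fact k" for k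
    using mult_left_mono[OF norm_Ad_exp_term_le, of "\<bar>s\<bar>^k" A B k]
    by (simp add: power_abs power_mult_distrib mult_ac)
qed

lemma bounded_linear_dexp:
  fixes A :: "'a::{real_normed_algebra,banach}"
  shows "bounded_linear (dexp A)"
  unfolding dexp_def[abs_def]
proof (rule bounded_linear_suminf)
  show "bounded_linear (\<lambda>B. dexp_term A B k)" for k
    unfolding dexp_term_def by (rule bounded_linear_compose[OF bounded_linear_scaleR_right bounded_linear_ad_iter])
  show "norm (dexp_term A B k) \<le> (2 * norm A)^k / fact k * norm B" for k B
    using norm_dexp_term_le[of A B k] by (simp add: mult_ac)
  show "summable (\<lambda>k. (2 * norm A)^k / fact k)"
    using summable_exp[of "2 * norm A"] by (simp add: field_simps)
qed

lemma Ad_exp_series_has_vector_derivative: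
  fixes A B :: "'a::{real_normed_algebra_1,banach}"
  defines "Y \<equiv> \<lambda>s. \<Sum>k. s^k *\<^sub>R Ad_exp_term A B k"
  shows "(Y has_vector_derivative - (A * Y s - Y s * A)) (at s)"
proof -
  have Y_split: "Y s = B + (\<Sum>k. s^Suc k *\<^sub>R Ad_exp_term A B (Suc k))" for s
    using suminf_split_head[OF summable_Ad_exp_series[of s A B]] by (simp add: Y_def Ad_exp_term_def)
  have "norm (Ad_exp_term A B (Suc k)) \<le> (norm B * (2 * norm A)) * (2 * norm A)^k / fact k" for k
    using norm_Ad_exp_term_le[of A B "Suc k"] divide_left_mono[OF fact_mono[of k "Suc k"],
        of "norm B * (2 * norm A)^Suc k"]
    by (simp add: mult_ac)
  hence "((\<lambda>s. \<Sum>k. s^Suc k *\<^sub>R Ad_exp_term A B (Suc k)) has_vector_derivative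
      (\<Sum>k. s^k *\<^sub>R (Suc k *\<^sub>R Ad_exp_term A B (Suc k)))) (at s)"
    by (rule has_vector_derivative_exp_bounded_series) simp
  moreover have "(\<Sum>k. s^k *\<^sub>R (Suc k *\<^sub>R Ad_exp_term A B (Suc k))) = - (A * Y s - Y s * A)"
  proof -
    note summable = summable_Ad_exp_series[of s A B]
    have "(\<Sum>k. s^k *\<^sub>R (Suc k *\<^sub>R Ad_exp_term A B (Suc k)))
        = - ((\<Sum>k. A * (s^k *\<^sub>R Ad_exp_term A B k)) - (\<Sum>k. (s^k *\<^sub>R Ad_exp_term A B k) * A))"
      unfolding Suc_scaleR_Ad_exp_term
      using suminf_diff[OF summable_mult[OF summable] summable_mult2[OF summable]]
        suminf_minus[OF summable_diff[OF summable_mult[OF summable] summable_mult2[OF summable]]]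
      by (simp add: algebra_simps)
    also have "\<dots> = - (A * Y s - Y s * A)"
      by (simp only: Y_def suminf_mult[OF summable] suminf_mult2[OF summable])
    finally show ?thesis .
  qed
  ultimately show ?thesis
    unfolding Y_split[abs_def] by (auto intro: derivative_eq_intros)
qed

lemma exp_conj_eq_Ad_exp_series:
  fixes A B :: "'a::{real_normed_algebra_1,banach}"
  shows "exp (s *\<^sub>R (-A)) * B * exp (s *\<^sub>R A) = (\<Sum>k. s^k *\<^sub>R Ad_exp_term A B k)"
proof -
  define Y where "Y s = (\<Sum>k. s^k *\<^sub>R Ad_exp_term A B k)" for s
  define Z where "Z s = exp (s *\<^sub>R A) * Y s * exp (s *\<^sub>R (-A))" for s
  have "(Z has_vector_derivative 0) (at s)" for s
  proof -
    have "(Z has_vector_derivative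
       exp (s *\<^sub>R A) * Y s * ((-A) * exp (s *\<^sub>R (-A))) +
        (exp (s *\<^sub>R A) * (- (A * Y s - Y s * A)) + (exp (s *\<^sub>R A) * A) * Y s) * exp (s *\<^sub>R (-A))) (at s)"
      unfolding Z_def Y_def
      by (intro has_vector_derivative_mult exp_scaleR_has_vector_derivative_left
            exp_scaleR_has_vector_derivative_right Ad_exp_series_has_vector_derivative)
    thus ?thesis by (simp add: algebra_simps)
  qed
  hence "Z s = Z 0" by (rule has_vector_derivative_zero_constant)
  moreover have "Y 0 = B"
    using suminf_split_head[OF summable_Ad_exp_series[of 0 A B]] by (simp add: Y_def Ad_exp_term_def)
  ultimately have "B = Z s" by (simp add: Z_def)
  hence "exp (s *\<^sub>R (-A)) * B * exp (s *\<^sub>R A)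
      = (exp (s *\<^sub>R (-A)) * exp (s *\<^sub>R A)) * Y s * (exp (s *\<^sub>R (-A)) * exp (s *\<^sub>R A))"
    by (simp add: Z_def mult.assoc)
  also have "\<dots> = Y s"
    using exp_minus_inverse[of "s *\<^sub>R (-A)"] by simp
  finally show ?thesis by (simp add: Y_def)
qed

lemma dexp_series_has_vector_derivative:
  fixes A B :: "'a::{real_normed_algebra_1,banach}"
  shows "((\<lambda>s. \<Sum>k. s^Suc k *\<^sub>R dexp_term A B k) has_vector_derivative
           exp (s *\<^sub>R (-A)) * B * exp (s *\<^sub>R A)) (at s)"
  unfolding exp_conj_eq_Ad_exp_series
  using has_vector_derivative_exp_bounded_series[OF norm_dexp_term_le[of A B], of s]
  by (simp add: Suc_scaleR_dexp_term del: of_nat_Suc)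

lemma norm_exp_scaleR_le:
  fixes X :: "'a::{real_normed_algebra_1,banach}"
  assumes "s \<in> {0..1}"
  shows "norm (exp (s *\<^sub>R X)) \<le> exp (norm X)"
proof -
  have "norm (s *\<^sub>R X) \<le> norm X"
    using assms by (simp add: mult_left_le_one_le)
  thus ?thesis using norm_exp[of "s *\<^sub>R X"] by (meson exp_le_cancel_iff order_trans)
qed

lemma exp_minus_mult_exp_has_vector_derivative:
  fixes A B :: "'a::{real_normed_algebra_1,banach}"
  shows "((\<lambda>s. exp (s *\<^sub>R (-A)) * exp (s *\<^sub>R (A + B))) has_vector_derivative
           exp (s *\<^sub>R (-A)) * B * exp (s *\<^sub>R (A + B))) (at s within T)"
proof -
  have "((\<lambda>s. exp (s *\<^sub>R (-A)) * exp (s *\<^sub>R (A + B))) has_vector_derivative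
      exp (s *\<^sub>R (-A)) * ((A + B) * exp (s *\<^sub>R (A + B))) + exp (s *\<^sub>R (-A)) * (-A) * exp (s *\<^sub>R (A + B)))
      (at s within T)"
    by (intro has_vector_derivative_mult exp_scaleR_has_vector_derivative_right
        has_vector_derivative_at_within[OF exp_scaleR_has_vector_derivative_left])
  thus ?thesis by (simp add: algebra_simps)
qed

lemma norm_exp_scaleR_add_diff_le:
  fixes A B :: "'a::{real_normed_algebra_1,banach}"
  assumes "norm B \<le> 1" and s: "s \<in> {0..1}"
  shows "norm (exp (s *\<^sub>R (A + B)) - exp (s *\<^sub>R A)) \<le> exp (norm A)^2 * exp (norm A + 1) * norm B"
proof -
  define C where "C = exp (norm A) * exp (norm A + 1)"
  define k where "k s = exp (s *\<^sub>R (-A)) * exp (s *\<^sub>R (A + B))" for s :: real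
  have norm_add: "norm (A + B) \<le> norm A + 1"
    using norm_triangle_ineq[of A B] assms(1) by simp
  have "norm (exp (x *\<^sub>R (-A)) * B * exp (x *\<^sub>R (A + B))) \<le> C * norm B" if "x \<in> {0..1}" for x
  proof -
    have "norm (exp (x *\<^sub>R (-A)) * B * exp (x *\<^sub>R (A + B)))
        \<le> norm (exp (x *\<^sub>R (-A))) * norm B * norm (exp (x *\<^sub>R (A + B)))"
      by (rule order_trans[OF norm_mult_ineq mult_right_mono[OF norm_mult_ineq norm_ge_zero]])
    also have "\<dots> \<le> exp (norm A) * norm B * exp (norm A + 1)"
      using norm_exp_scaleR_le[OF that, of "-A"] norm_exp_scaleR_le[OF that, of "A + B"] norm_add
      by (intro mult_mono) (auto intro: order_trans)
    finally show ?thesis by (simp add: C_def mult_ac)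
  qed
  hence "norm (k s - k 0) \<le> (C * norm B) * (s - 0)"
    using s unfolding k_def
    by (intro norm_diff_le_vector_derivative_bound[OF exp_minus_mult_exp_has_vector_derivative]) auto
  also have "\<dots> \<le> C * norm B" using s by (simp add: C_def mult_left_le)
  finally have "norm (k s - 1) \<le> C * norm B" by (simp add: k_def)
  moreover have "exp (s *\<^sub>R (A + B)) - exp (s *\<^sub>R A) = exp (s *\<^sub>R A) * (k s - 1)"
    using exp_minus_inverse[of "s *\<^sub>R A"] by (simp add: k_def right_diff_distrib mult.assoc[symmetric])
  ultimately have "norm (exp (s *\<^sub>R (A + B)) - exp (s *\<^sub>R A)) \<le> exp (norm A) * (C * norm B)"
    using norm_exp_scaleR_le[OF s, of A] by (auto intro!: order_trans[OF norm_mult_ineq] mult_mono)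
  thus ?thesis by (simp add: C_def power2_eq_square mult_ac)
qed

lemma exp_add_dexp_remainder_le:
  fixes A B :: "'a::{real_normed_algebra_1,banach}"
  assumes "norm B \<le> 1"
  shows "norm (exp (A + B) - exp A - exp A * dexp A B) \<le> exp (norm A)^4 * exp (norm A + 1) * norm B^2"
proof -
  define C where "C = exp (norm A)^3 * exp (norm A + 1) * norm B^2"
  define h where "h s = exp (s *\<^sub>R (-A)) * exp (s *\<^sub>R (A + B)) - 1 - (\<Sum>k. s^Suc k *\<^sub>R dexp_term A B k)"
    for s :: real
  have "(h has_vector_derivative exp (x *\<^sub>R (-A)) * B * exp (x *\<^sub>R (A + B)) - 0
      - exp (x *\<^sub>R (-A)) * B * exp (x *\<^sub>R A)) (at x within {0..1})" for x
    unfolding h_def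
    by (intro has_vector_derivative_diff exp_minus_mult_exp_has_vector_derivative has_vector_derivative_const
        has_vector_derivative_at_within[OF dexp_series_has_vector_derivative])
  moreover have "norm (exp (x *\<^sub>R (-A)) * B * exp (x *\<^sub>R (A + B)) - 0 - exp (x *\<^sub>R (-A)) * B * exp (x *\<^sub>R A))
      \<le> C" if "x \<in> {0..1}" for x
  proof -
    have "norm (exp (x *\<^sub>R (-A)) * B * (exp (x *\<^sub>R (A + B)) - exp (x *\<^sub>R A)))
        \<le> norm (exp (x *\<^sub>R (-A))) * norm B * norm (exp (x *\<^sub>R (A + B)) - exp (x *\<^sub>R A))"
      by (rule order_trans[OF norm_mult_ineq mult_right_mono[OF norm_mult_ineq norm_ge_zero]])
    also have "\<dots> \<le> exp (norm A) * norm B * (exp (norm A)^2 * exp (norm A + 1) * norm B)"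
      using norm_exp_scaleR_le[OF that, of "-A"] norm_exp_scaleR_add_diff_le[OF assms that]
      by (intro mult_mono) auto
    finally show ?thesis by (simp add: C_def algebra_simps power2_eq_square power3_eq_cube)
  qed
  ultimately have "norm (h 1 - h 0) \<le> C * (1 - 0)"
    by (intro norm_diff_le_vector_derivative_bound) auto
  moreover have "h 0 = 0" by (simp add: h_def)
  moreover have "exp (A + B) - exp A - exp A * dexp A B = exp A * h 1"
    using exp_minus_inverse[of A]
    by (simp add: h_def dexp_def algebra_simps mult.assoc[symmetric])
  ultimately have "norm (exp (A + B) - exp A - exp A * dexp A B) \<le> exp (norm A) * C"
    using norm_exp[of A] by (auto intro!: order_trans[OF norm_mult_ineq] mult_mono)
  thus ?thesis by (simp add: C_def eval_nat_numeral mult_ac)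
qed

lemma has_derivative_exp:
  fixes A :: "'a::{real_normed_algebra_1,banach}"
  shows "(exp has_derivative (\<lambda>B. exp A * dexp A B)) (at A)"
  unfolding has_derivative_at_alt
proof (intro conjI allI impI)
  show "bounded_linear (\<lambda>B. exp A * dexp A B)"
    by (rule bounded_linear_compose[OF bounded_linear_mult_right bounded_linear_dexp])
  fix e :: real
  assume "e > 0"
  define K where "K = exp (norm A)^4 * exp (norm A + 1)"
  have "K \<ge> 0" by (simp add: K_def)
  show "\<exists>d>0. \<forall>y. norm (y - A) < d \<longrightarrow> norm (exp y - exp A - exp A * dexp A (y - A)) \<le> e * norm (y - A)"
  proof (intro exI[of _ "min 1 (e / (K + 1))"] conjI allI impI)
    show "min 1 (e / (K + 1)) > 0" using \<open>e > 0\<close> \<open>K \<ge> 0\<close> by simp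
    fix y
    assume y: "norm (y - A) < min 1 (e / (K + 1))"
    have "K * norm (y - A) \<le> e"
    proof -
      have "K * norm (y - A) \<le> K * (e / (K + 1))"
        using y \<open>K \<ge> 0\<close> by (intro mult_left_mono) auto
      also have "\<dots> \<le> e" using \<open>K \<ge> 0\<close> \<open>e > 0\<close> by (simp add: field_simps)
      finally show ?thesis .
    qed
    moreover have "norm (exp y - exp A - exp A * dexp A (y - A)) \<le> K * norm (y - A)^2"
      using exp_add_dexp_remainder_le[of "y - A" A] y by (simp add: K_def)
    ultimately show "norm (exp y - exp A - exp A * dexp A (y - A)) \<le> e * norm (y - A)"
      by (simp add: power2_eq_square) (metis mult.assoc mult_right_mono norm_ge_zero order_trans)
  qed
qed

lemma exp_conj:
  fixes x y x' :: "'a::{real_normed_algebra_1,banach}"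
  assumes "x' * x = 1" and "x * x' = 1"
  shows "exp (x * y * x') = x * exp y * x'"
proof -
  have power: "(x * y * x')^k = x * y^k * x'" for k
  proof (induction k)
    case (Suc k)
    have "(x * y * x')^Suc k = (x * y * x') * (x * y^k * x')" by (simp only: power_Suc Suc.IH)
    also have "\<dots> = x * y * (x' * x) * y^k * x'" by (simp only: mult.assoc)
    finally show ?case by (simp add: assms(1) mult.assoc)
  qed (simp add: assms(2))
  have "exp (x * y * x') = (\<Sum>k. x * (y^k /\<^sub>R fact k) * x')"
    by (simp add: exp_def power)
  also have "\<dots> = (\<Sum>k. x * (y^k /\<^sub>R fact k)) * x'"
    by (rule suminf_mult2[symmetric, OF summable_mult[OF summable_exp_generic]])
  also have "(\<Sum>k. x * (y^k /\<^sub>R fact k)) = x * exp y"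
    unfolding exp_def by (rule suminf_mult[OF summable_exp_generic])
  finally show ?thesis .
qed

lemma dexp_left_error:
  fixes x xb a :: "real \<Rightarrow> 'a::{real_normed_algebra_1,banach}"
  assumes dx: "(x has_vector_derivative x t * L + R * x t) (at t)"
    and dxb: "(xb has_vector_derivative xb t * Lb + Rb * xb t) (at t)"
    and xb: "\<And>s. xb s = x s * exp (a s)"
    and da: "(a has_vector_derivative a') (at t)"
    and inv: "x' * x t = 1"
  shows "dexp (a t) a' = Lb - exp (- a t) * (L + x' * (R - Rb) * x t) * exp (a t)"
proof -
  define e where "e = exp (a t)"
  define q where "q = dexp (a t) a'"
  have "((\<lambda>s. exp (a s)) has_derivative (\<lambda>h. exp (a t) * dexp (a t) (h *\<^sub>R a'))) (at t)"
    using has_derivative_compose[OF da[unfolded has_vector_derivative_def] has_derivative_exp] by simp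
  hence "((\<lambda>s. exp (a s)) has_vector_derivative e * q) (at t)"
    by (simp add: has_vector_derivative_def e_def q_def linear_scale[OF bounded_linear.linear[OF bounded_linear_dexp]])
  from has_vector_derivative_mult[OF dx this]
  have "(xb has_vector_derivative x t * (e * q) + (x t * L + R * x t) * e) (at t)"
    by (simp add: xb[abs_def] e_def)
  from vector_derivative_unique_at[OF dxb this]
  have "x t * e * Lb + Rb * (x t * e) = x t * (e * q) + (x t * L + R * x t) * e"
    by (simp add: xb e_def)
  hence "exp (- a t) * (x' * (x t * (e * q))) = exp (- a t) * (x' * (x t * e * Lb + Rb * (x t * e) - (x t * L + R * x t) * e))"
    by (simp add: algebra_simps)
  moreover have "exp (- a t) * (x' * (x t * y)) = exp (- a t) * y" for y
    using inv by (simp add: mult.assoc[symmetric])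
  moreover have "exp (- a t) * (e * y) = y" for y
    using exp_minus_inverse[of "- a t"] by (simp add: e_def mult.assoc[symmetric])
  ultimately show ?thesis
    by (simp add: q_def e_def algebra_simps)
qed

section \<open>The function \<open>(exp x - 1) / x\<close>\<close>

definition exprel :: "'a::{real_normed_algebra_1,banach} \<Rightarrow> 'a" where
  "exprel x = (\<Sum>k. (1 / fact (Suc k)) *\<^sub>R x^k)"

lemma norm_exprel_term_le: "norm ((1 / fact (Suc k)) *\<^sub>R x^k) \<le> 1 * norm x^k / fact k"
  for x :: "'a::{real_normed_algebra_1,banach}"
proof -
  have "norm ((1 / fact (Suc k)) *\<^sub>R x^k) \<le> norm (x^k) / fact k"
    by (simp add: divide_left_mono fact_mono)
  thus ?thesis using divide_right_mono[OF norm_power_ineq[of x k], of "fact k"] by simp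
qed

lemma summable_exprel: "summable (\<lambda>k. (1 / fact (Suc k)) *\<^sub>R (x::'a::{real_normed_algebra_1,banach})^k)"
  by (rule summable_exp_bounded[OF norm_exprel_term_le])

lemma exprel_commute:
  assumes "x * y = y * x"
  shows "exprel x * y = y * exprel x"
proof -
  have "exprel x * y = (\<Sum>k. ((1 / fact (Suc k)) *\<^sub>R x^k) * y)"
    unfolding exprel_def by (rule suminf_mult2[OF summable_exprel])
  also have "\<dots> = (\<Sum>k. y * ((1 / fact (Suc k)) *\<^sub>R x^k))"
    by (simp only: mult_scaleR_left mult_scaleR_right power_commuting_commutes[OF assms])
  also have "\<dots> = y * exprel x"
    unfolding exprel_def by (rule suminf_mult[OF summable_exprel])
  finally show ?thesis .
qed

lemma mult_exprel: "x * exprel x = exp x - 1"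
proof -
  have "x * exprel x = (\<Sum>k. x * ((1 / fact (Suc k)) *\<^sub>R x^k))"
    unfolding exprel_def by (rule suminf_mult[OF summable_exprel, symmetric])
  also have "\<dots> = (\<Sum>k. x^Suc k /\<^sub>R fact (Suc k))"
    by (simp add: divide_inverse)
  also have "\<dots> = exp x - 1"
    using suminf_split_head[OF summable_exp_generic[of x]] by (simp add: exp_def)
  finally show ?thesis .
qed

lemma exprel_mult: "exprel x * x = exp x - 1"
  using mult_exprel[of x] exprel_commute[of x x] by simp

lemma scaleR_exprel_has_vector_derivative:
  fixes y :: "'a::{real_normed_algebra_1,banach}"
  shows "((\<lambda>s. s *\<^sub>R exprel (s *\<^sub>R y)) has_vector_derivative exp (s *\<^sub>R y)) (at s)"
proof -
  have "s *\<^sub>R exprel (s *\<^sub>R y) = (\<Sum>k. s^Suc k *\<^sub>R ((1 / fact (Suc k)) *\<^sub>R y^k))" for s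
  proof -
    have "s *\<^sub>R ((1 / fact (Suc k)) *\<^sub>R (s *\<^sub>R y)^k) = s^Suc k *\<^sub>R ((1 / fact (Suc k)) *\<^sub>R y^k)" for k
      by (simp only: scaleR_power scaleR_scaleR power_Suc mult.assoc mult.commute mult.left_commute)
    thus ?thesis
      unfolding exprel_def suminf_scaleR_right[OF summable_exprel] by (simp only:)
  qed
  moreover have "(\<Sum>k. s^k *\<^sub>R (Suc k *\<^sub>R ((1 / fact (Suc k)) *\<^sub>R y^k))) = exp (s *\<^sub>R y)"
  proof -
    have "s^k *\<^sub>R (Suc k *\<^sub>R ((1 / fact (Suc k)) *\<^sub>R y^k)) = (s *\<^sub>R y)^k /\<^sub>R fact k" for k
      by (simp add: fact_Suc field_simps del: of_nat_Suc)
    thus ?thesis by (simp only: exp_def)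
  qed
  ultimately show ?thesis
    using has_vector_derivative_exp_bounded_series[OF norm_exprel_term_le[of _ y], of s] by simp
qed

text \<open>Both \<open>s exprel (- s x) exp (s x)\<close> and \<open>s exprel (s x)\<close> have derivative \<open>exp (s x)\<close>.\<close>

lemma exprel_minus_mult_exp: "exprel (-x) * exp x = exprel (x::'a::{real_normed_algebra_1,banach})"
proof -
  define F where "F s = s *\<^sub>R exprel (s *\<^sub>R (-x)) * exp (s *\<^sub>R x) - s *\<^sub>R exprel (s *\<^sub>R x)" for s
  have "(F has_vector_derivative 0) (at s)" for s
  proof -
    have "(F has_vector_derivative
       (s *\<^sub>R exprel (s *\<^sub>R (-x)) * (exp (s *\<^sub>R x) * x) + exp (s *\<^sub>R (-x)) * exp (s *\<^sub>R x))
        - exp (s *\<^sub>R x)) (at s)"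
      unfolding F_def
      by (intro has_vector_derivative_diff has_vector_derivative_mult scaleR_exprel_has_vector_derivative
           exp_scaleR_has_vector_derivative_right)
    moreover have "s *\<^sub>R exprel (s *\<^sub>R (-x)) * (exp (s *\<^sub>R x) * x) = (1 - exp (s *\<^sub>R (-x))) * exp (s *\<^sub>R x)"
    proof -
      have "exprel (s *\<^sub>R (-x)) * x = x * exprel (s *\<^sub>R (-x))"
        by (rule exprel_commute) (simp add: algebra_simps)
      hence "s *\<^sub>R exprel (s *\<^sub>R (-x)) * (exp (s *\<^sub>R x) * x)
          = - ((s *\<^sub>R (-x)) * exprel (s *\<^sub>R (-x))) * exp (s *\<^sub>R x)"
        by (simp add: exp_times_scaleR_commute mult.assoc[symmetric])
      also have "(s *\<^sub>R (-x)) * exprel (s *\<^sub>R (-x)) = exp (s *\<^sub>R (-x)) - 1"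
        by (rule mult_exprel)
      finally show ?thesis by simp
    qed
    moreover have "exp (s *\<^sub>R (-x)) * exp (s *\<^sub>R x) = 1"
      using exp_minus_inverse[of "- (s *\<^sub>R x)"] by simp
    ultimately show ?thesis by (simp add: left_diff_distrib)
  qed
  hence "F 1 = F 0" by (rule has_vector_derivative_zero_constant)
  thus ?thesis by (simp add: F_def)
qed

section \<open>Matrix exponential and inverses\<close>

lemma matrix_inv_mult_invertible:
  assumes "invertible A"
  shows "A ** matrix_inv A = mat 1" and "matrix_inv A ** A = mat 1"
proof -
  from assms obtain B where "A ** B = mat 1 \<and> B ** A = mat 1" unfolding invertible_def by blast
  hence "A ** matrix_inv A = mat 1 \<and> matrix_inv A ** A = mat 1"
    unfolding matrix_inv_def by (rule someI)
  thus "A ** matrix_inv A = mat 1" "matrix_inv A ** A = mat 1" by auto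
qed

lemma matrix_inv_unique:
  fixes A B :: "real^'m^'m"
  assumes "A ** B = mat 1" and "B ** A = mat 1"
  shows "invertible A" and "matrix_inv A = B"
proof -
  show "invertible A" using assms unfolding invertible_def by blast
  have "matrix_inv A = matrix_inv A ** (A ** B)" by (simp add: assms(1))
  also have "\<dots> = (matrix_inv A ** A) ** B" by (simp add: matrix_mul_assoc)
  finally show "matrix_inv A = B" by (simp add: matrix_inv_mult_invertible \<open>invertible A\<close>)
qed

lemma matrix_inv_matrix_inv: "invertible A \<Longrightarrow> matrix_inv (matrix_inv A) = (A::real^'m^'m)"
  by (rule matrix_inv_unique(2)[OF matrix_inv_mult_invertible(2,1)])

lemma endo_of_mat_matrix_inv:
  assumes "invertible A"
  shows "endo_of_mat (matrix_inv A) * endo_of_mat A = 1" and "endo_of_mat A * endo_of_mat (matrix_inv A) = 1"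
  using matrix_inv_mult_invertible[OF assms] by (simp_all add: endo_of_mat_mult[symmetric] endo_of_mat_one)

lemma invertible_endo_of_mat_inverse:
  fixes A B :: "real^'m^'m"
  assumes "endo_of_mat A * endo_of_mat B = 1" and "endo_of_mat B * endo_of_mat A = 1"
  shows "invertible A" and "matrix_inv A = B"
  using matrix_inv_unique[of A B] assms by (simp_all add: endo_of_mat_eq_iff[symmetric] endo_of_mat_simps)

lemma endo_of_mat_mexp: "endo_of_mat (mexp A) = exp (endo_of_mat A)"
  using endo_of_mat_suminf[OF summable_mexp, of A]
  by (simp add: mexp_def exp_def endo_of_mat_simps endo_of_mat_mpow inverse_eq_divide)

lemma mexp_minus:
  shows "invertible (mexp B)" and "matrix_inv (mexp B) = mexp (- B)"
  using invertible_endo_of_mat_inverse[of "mexp B" "mexp (- B)"]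
    exp_minus_inverse[of "endo_of_mat B"] exp_minus_inverse[of "- endo_of_mat B"]
  by (simp_all add: endo_of_mat_mexp endo_of_mat_minus)

lemma mpow_minus: "mpow (- M) k = (-1)^k *\<^sub>R mpow M k"
proof (rule endo_of_mat_inject)
  have "(- x) ^ k = (-1::real)^k *\<^sub>R x^k" for x :: "'c::real_normed_algebra_1"
    by (induction k) simp_all
  thus "endo_of_mat (mpow (- M) k) = endo_of_mat ((-1)^k *\<^sub>R mpow M k)"
    by (simp add: endo_of_mat_mpow endo_of_mat_simps)
qed

text \<open>The matrix \<open>(exp M - I) / M\<close>; the theorem's formula for \<open>U_l\<^sup>-\<^sup>1\<close> is \<open>- mat_exprel (ad \<zeta>\<^sub>l)\<close>.\<close>

definition mat_exprel :: "real^'n^'n \<Rightarrow> real^'n^'n" where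
  "mat_exprel M = (\<Sum>k. (1 / fact (k + 1)) *\<^sub>R mpow M k)"

lemma endo_of_mat_mat_exprel: "endo_of_mat (mat_exprel M) = exprel (endo_of_mat M)"
  and summable_mat_exprel: "summable (\<lambda>k. (1 / fact (k + 1)) *\<^sub>R mpow M k)"
proof -
  have term_eq: "endo_of_mat ((1 / fact (k + 1)) *\<^sub>R mpow M k) = (1 / fact (Suc k)) *\<^sub>R endo_of_mat M ^ k" for k
    by (simp add: endo_of_mat_simps endo_of_mat_mpow)
  show summable: "summable (\<lambda>k. (1 / fact (k + 1)) *\<^sub>R mpow M k)"
    unfolding summable_endo_of_mat_iff[symmetric] term_eq by (rule summable_exprel)
  show "endo_of_mat (mat_exprel M) = exprel (endo_of_mat M)"
    unfolding mat_exprel_def endo_of_mat_suminf[OF summable] term_eq exprel_def ..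
qed

lemma dexp_series_eq_mat_exprel: "dexp_series W z = mat_exprel (- ad_mat W z)"
  by (simp add: dexp_series_def mat_exprel_def mpow_minus)

lemma invertible_mexp_mat_exprel:
  fixes M :: "real^'n^'n"
  defines "U \<equiv> - (mexp (- M) ** matrix_inv (mat_exprel (- M)))"
  assumes "invertible (mat_exprel (- M))"
  shows "invertible U" and "matrix_inv U = - mat_exprel M"
proof -
  define m where "m = endo_of_mat M"
  define Di where "Di = endo_of_mat (matrix_inv (mat_exprel (- M)))"
  have Di: "Di * exprel (- m) = 1" "exprel (- m) * Di = 1"
    using endo_of_mat_matrix_inv[OF assms(2)] by (simp_all add: Di_def m_def endo_of_mat_mat_exprel endo_of_mat_minus)
  have U: "endo_of_mat U = - (exp (- m) * Di)"
    by (simp add: U_def Di_def m_def endo_of_mat_simps endo_of_mat_mexp)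
  have V: "endo_of_mat (- mat_exprel M) = - (exprel (- m) * exp m)"
    by (simp add: m_def endo_of_mat_minus endo_of_mat_mat_exprel exprel_minus_mult_exp)
  have "endo_of_mat U * endo_of_mat (- mat_exprel M) = exp (- m) * (Di * exprel (- m)) * exp m"
    and "endo_of_mat (- mat_exprel M) * endo_of_mat U = exprel (- m) * (exp m * exp (- m)) * Di"
    unfolding U V by (simp_all add: mult.assoc)
  hence "endo_of_mat U * endo_of_mat (- mat_exprel M) = 1" "endo_of_mat (- mat_exprel M) * endo_of_mat U = 1"
    using Di exp_minus_inverse[of m] exp_minus_inverse[of "- m"] by simp_all
  thus "invertible U" "matrix_inv U = - mat_exprel M"
    by (rule invertible_endo_of_mat_inverse)+
qed

lemma comm_inverse:
  fixes d d' e :: "'a::ring_1"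
  assumes "d' * d = 1" and "d * d' = 1" and "d * e = e * d"
  shows "d' * e = e * d'"
proof -
  have "d' * e = d' * (e * d) * d'" by (simp add: assms(2) mult.assoc)
  also have "\<dots> = (d' * d) * e * d'" by (simp only: assms(3) mult.assoc)
  also have "\<dots> = e * d'" by (simp add: assms(1))
  finally show ?thesis .
qed

text \<open>Uses \<open>mat_exprel (- M) ** M = I - exp (- M)\<close> and that \<open>mat_exprel (- M)\<close>, hence its
  inverse, commutes with \<open>mexp (- M)\<close>.\<close>

lemma mat_exprel_equation_solve:
  fixes M :: "real^'n^'n"
  assumes inv: "invertible (mat_exprel (- M))"
    and eq: "mat_exprel (- M) *v z' = b - mexp (- M) *v (b + w)"
  shows "z' = M *v b + (- (mexp (- M) ** matrix_inv (mat_exprel (- M)))) *v w"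
proof -
  define D where "D = mat_exprel (- M)"
  define D' where "D' = matrix_inv D"
  have D'D: "D' ** D = mat 1" unfolding D'_def D_def by (rule matrix_inv_mult_invertible(2)[OF inv])
  have DM: "D ** M = mat 1 - mexp (- M)"
  proof (rule endo_of_mat_inject)
    have "exprel (- endo_of_mat M) * endo_of_mat M = 1 - exp (- endo_of_mat M)"
      using exprel_mult[of "- endo_of_mat M"] by (simp add: algebra_simps)
    thus "endo_of_mat (D ** M) = endo_of_mat (mat 1 - mexp (- M))"
      by (simp add: D_def endo_of_mat_simps endo_of_mat_mexp endo_of_mat_mat_exprel)
  qed
  have "endo_of_mat D' * endo_of_mat (mexp (- M)) = endo_of_mat (mexp (- M)) * endo_of_mat D'"
  proof (rule comm_inverse)
    show "endo_of_mat D' * endo_of_mat D = 1" "endo_of_mat D * endo_of_mat D' = 1"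
      unfolding D'_def D_def by (rule endo_of_mat_matrix_inv[OF inv])+
    show "endo_of_mat D * endo_of_mat (mexp (- M)) = endo_of_mat (mexp (- M)) * endo_of_mat D"
      unfolding D_def endo_of_mat_mexp endo_of_mat_mat_exprel endo_of_mat_minus
      by (rule exprel_commute) (use exp_times_arg_commute[of "- endo_of_mat M"] in simp)
  qed
  hence comm: "D' ** mexp (- M) = mexp (- M) ** D'" by (simp add: endo_of_mat_eq_iff[symmetric] endo_of_mat_mult)
  have "D *v z' = (b - mexp (- M) *v b) - mexp (- M) *v w"
    using eq by (simp add: D_def matrix_vector_right_distrib)
  also have "b - mexp (- M) *v b = (D ** M) *v b"
    by (simp add: DM matrix_vector_mult_diff_rdistrib)
  finally have "z' = ((D' ** D) ** M) *v b - (D' ** mexp (- M)) *v w"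
    using D'D by (metis matrix_vector_mul_assoc matrix_vector_mult_diff_distrib matrix_vector_mul_lid)
  thus ?thesis
    unfolding D'D comm by (simp add: D'_def D_def matrix_vector_mult_def vec_eq_iff sum_negf)
qed

section \<open>Matrix Lie groups and their Lie algebras\<close>

lemma matrix_Lie_group_invertible: "matrix_Lie_group G \<Longrightarrow> X \<in> G \<Longrightarrow> invertible X"
  and matrix_Lie_group_mult: "matrix_Lie_group G \<Longrightarrow> X \<in> G \<Longrightarrow> Y \<in> G \<Longrightarrow> X ** Y \<in> G"
  and matrix_Lie_group_matrix_inv: "matrix_Lie_group G \<Longrightarrow> X \<in> G \<Longrightarrow> matrix_inv X \<in> G"
  unfolding matrix_Lie_group_def by blast+

lemma lie_algebra_conj_closed:
  assumes G: "matrix_Lie_group G" and "X \<in> G" and "B \<in> lie_algebra G"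
  shows "X ** B ** matrix_inv X \<in> lie_algebra G"
  unfolding lie_algebra_def
proof (intro CollectI allI)
  fix t :: real
  note inv = endo_of_mat_matrix_inv[OF matrix_Lie_group_invertible[OF G \<open>X \<in> G\<close>]]
  have "endo_of_mat (mexp (t *\<^sub>R (X ** B ** matrix_inv X))) = endo_of_mat (X ** mexp (t *\<^sub>R B) ** matrix_inv X)"
    using exp_conj[OF inv, of "t *\<^sub>R endo_of_mat B"] by (simp add: endo_of_mat_mexp endo_of_mat_simps)
  moreover have "mexp (t *\<^sub>R B) \<in> G" using \<open>B \<in> lie_algebra G\<close> by (simp add: lie_algebra_def)
  ultimately show "mexp (t *\<^sub>R (X ** B ** matrix_inv X)) \<in> G"
    using matrix_Lie_group_mult[OF G] matrix_Lie_group_matrix_inv[OF G \<open>X \<in> G\<close>] \<open>X \<in> G\<close>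
    by (simp add: endo_of_mat_eq_iff)
qed

lemma linear_matrix_commutator: "linear (\<lambda>B. (A::real^'m^'m) ** B - B ** A)"
  by (rule linearI) (simp_all add: endo_of_mat_eq_iff[symmetric] endo_of_mat_simps algebra_simps)

lemma linear_matrix_conj: "linear (\<lambda>B. (A::real^'m^'m) ** B ** (C::real^'m^'m))"
  by (rule linearI) (rule endo_of_mat_inject, simp add: endo_of_mat_simps algebra_simps)+

context
  fixes G :: "(real^'m^'m) set" and W :: "real^'n \<Rightarrow> real^'m^'m"
  assumes W: "wedge_map G W"
begin

lemma linear_wedge: "linear W"
  and inj_wedge: "inj W"
  and wedge_in_lie_algebra: "W y \<in> lie_algebra G"
  using W by (auto simp: wedge_map_def)

lemma wedge_vee: "B \<in> lie_algebra G \<Longrightarrow> W (vee W B) = B"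
  using W unfolding vee_def wedge_map_def by (metis f_inv_into_f)

lemma subspace_lie_algebra: "subspace (lie_algebra G)"
  using W unfolding wedge_map_def by (metis linear_subspace_image subspace_UNIV)

lemma linear_vee_comp:
  assumes F: "linear F" and FW: "\<And>y. F (W y) \<in> lie_algebra G"
  shows "linear (\<lambda>y. vee W (F (W y)))"
proof (rule linearI)
  fix y y' :: "real^'n" and c :: real
  have "W (vee W (F (W y)) + vee W (F (W y'))) = F (W (y + y'))"
    by (simp add: linear_add[OF linear_wedge] linear_add[OF F] wedge_vee[OF FW])
  also have "\<dots> = W (vee W (F (W (y + y'))))" by (rule wedge_vee[OF FW, symmetric])
  finally show "vee W (F (W (y + y'))) = vee W (F (W y)) + vee W (F (W y'))"
    by (rule injD[OF inj_wedge, symmetric])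
  have "W (c *\<^sub>R vee W (F (W y))) = F (W (c *\<^sub>R y))"
    by (simp add: linear_scale[OF linear_wedge] linear_scale[OF F] wedge_vee[OF FW])
  also have "\<dots> = W (vee W (F (W (c *\<^sub>R y))))" by (rule wedge_vee[OF FW, symmetric])
  finally show "vee W (F (W (c *\<^sub>R y))) = c *\<^sub>R vee W (F (W y))"
    by (rule injD[OF inj_wedge, symmetric])
qed

lemma bounded_linear_endo_of_mat_wedge: "bounded_linear (\<lambda>y. endo_of_mat (W y))"
  using linear_compose[OF linear_wedge linear_endo_of_mat] linear_conv_bounded_linear by (auto simp: o_def)

lemma bounded_linear_endo_of_mat_wedge_mult: "bounded_linear (\<lambda>B::real^'n^'n. endo_of_mat (W (B *v v)))"
proof -
  have "linear (\<lambda>B::real^'n^'n. endo_of_mat (W (B *v v)))"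
    by (rule linearI) (simp_all add: matrix_vector_mult_add_rdistrib linear_add[OF linear_wedge]
        linear_scale[OF linear_wedge] scaleR_matrix_vector_assoc[symmetric] endo_of_mat_simps)
  thus ?thesis by (rule linear_conv_bounded_linear[THEN iffD1])
qed

context
  assumes G: "matrix_Lie_group G"
begin

text \<open>\<open>Z Y - Y Z\<close> is the derivative at \<open>0\<close> of \<open>exp (s Z) Y exp (- s Z)\<close>, a curve in the closed
  subspace \<open>lie_algebra G\<close>.\<close>

lemma lie_algebra_bracket_closed:
  assumes "Z \<in> lie_algebra G" and "Y \<in> lie_algebra G"
  shows "Z ** Y - Y ** Z \<in> lie_algebra G"
proof -
  define f where "f s = mexp (s *\<^sub>R Z) ** Y ** matrix_inv (mexp (s *\<^sub>R Z))" for s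
  have f: "f s = mat_of_endo (exp (s *\<^sub>R endo_of_mat Z) * endo_of_mat Y * exp (s *\<^sub>R (- endo_of_mat Z)))" for s
    by (simp add: f_def mexp_minus endo_of_mat_simps endo_of_mat_mexp flip: endo_of_mat_eq_iff)
  have "((\<lambda>s. exp (s *\<^sub>R endo_of_mat Z) * endo_of_mat Y * exp (s *\<^sub>R (- endo_of_mat Z)))
      has_vector_derivative exp (0 *\<^sub>R endo_of_mat Z) * endo_of_mat Y * ((- endo_of_mat Z) * exp (0 *\<^sub>R (- endo_of_mat Z)))
        + (exp (0 *\<^sub>R endo_of_mat Z) * 0 + (endo_of_mat Z * exp (0 *\<^sub>R endo_of_mat Z)) * endo_of_mat Y)
          * exp (0 *\<^sub>R (- endo_of_mat Z))) (at 0)"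
    by (intro has_vector_derivative_mult has_vector_derivative_const exp_scaleR_has_vector_derivative_left)
  from bounded_linear.has_vector_derivative[OF bounded_linear_mat_of_endo this]
  moreover have "mat_of_endo (endo_of_mat Z * endo_of_mat Y - endo_of_mat Y * endo_of_mat Z) = Z ** Y - Y ** Z"
    by (metis endo_of_mat_mult endo_of_mat_diff mat_of_endo_inverse)
  ultimately have "(f has_vector_derivative Z ** Y - Y ** Z) (at 0)"
    unfolding f[abs_def] by simp
  moreover have "f s \<in> lie_algebra G" for s
    using lie_algebra_conj_closed[OF G _ \<open>Y \<in> lie_algebra G\<close>] \<open>Z \<in> lie_algebra G\<close>
    by (simp add: f_def lie_algebra_def)
  ultimately show ?thesis
    using vector_derivative_in_closed_subspace[OF closed_subspace subspace_lie_algebra]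
      subspace_lie_algebra by blast
qed

lemma wedge_ad_mat: "W (ad_mat W z *v y) = W z ** W y - W y ** W z"
proof -
  have bracket: "W z ** W y - W y ** W z \<in> lie_algebra G" for y
    by (intro lie_algebra_bracket_closed wedge_in_lie_algebra)
  have "linear (\<lambda>y. vee W (W z ** W y - W y ** W z))"
    by (rule linear_vee_comp[OF linear_matrix_commutator bracket])
  thus ?thesis
    unfolding ad_mat_def using matrix_works[of "\<lambda>y. vee W (W z ** W y - W y ** W z)"] wedge_vee[OF bracket]
    by (simp add: linear_matrix_vector_mul_eq)
qed

lemma wedge_Ad_mat:
  assumes "X \<in> G"
  shows "W (Ad_mat W X *v y) = X ** W y ** matrix_inv X"
proof -
  have conj: "X ** W y ** matrix_inv X \<in> lie_algebra G" for y
    by (rule lie_algebra_conj_closed[OF G assms wedge_in_lie_algebra])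
  have "linear (\<lambda>y. vee W (X ** W y ** matrix_inv X))"
    by (rule linear_vee_comp[OF linear_matrix_conj conj])
  thus ?thesis
    unfolding Ad_mat_def using matrix_works[of "\<lambda>y. vee W (X ** W y ** matrix_inv X)"] wedge_vee[OF conj]
    by (simp add: linear_matrix_vector_mul_eq)
qed

lemma ad_mat_antisym: "ad_mat W z *v y = - (ad_mat W y *v z)"
proof (rule injD[OF inj_wedge])
  show "W (ad_mat W z *v y) = W (- (ad_mat W y *v z))"
    by (simp add: wedge_ad_mat linear_neg[OF linear_wedge])
qed

lemma ad_iter_wedge:
  "ad_iter (endo_of_mat (W z)) k (endo_of_mat (W y)) = endo_of_mat (W (mpow (ad_mat W z) k *v y))"
  by (induction k)
    (simp_all add: ad_iter_Suc mpow_Suc matrix_vector_mul_assoc[symmetric] wedge_ad_mat endo_of_mat_simps)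

lemma dexp_wedge: "dexp (endo_of_mat (W z)) (endo_of_mat (W y)) = endo_of_mat (W (dexp_series W z *v y))"
proof -
  have "summable (\<lambda>k. ((-1)^k / fact (k + 1)) *\<^sub>R mpow (ad_mat W z) k)"
    using summable_mat_exprel[of "- ad_mat W z"] by (simp add: mpow_minus)
  from bounded_linear.suminf[OF bounded_linear_endo_of_mat_wedge_mult[of y] this]
  show ?thesis
    by (simp add: dexp_series_def dexp_def dexp_term_def ad_iter_wedge scaleR_matrix_vector_assoc[symmetric]
        linear_scale[OF linear_wedge] endo_of_mat_scaleR)
qed

lemma exp_conj_wedge:
  "exp (- endo_of_mat (W z)) * endo_of_mat (W v) * exp (endo_of_mat (W z))
    = endo_of_mat (W (mexp (- ad_mat W z) *v v))"
proof -
  from bounded_linear.suminf[OF bounded_linear_endo_of_mat_wedge_mult[of v] summable_mexp[of "- ad_mat W z"]]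
  have "endo_of_mat (W (mexp (- ad_mat W z) *v v)) = (\<Sum>k. 1^k *\<^sub>R Ad_exp_term (endo_of_mat (W z)) (endo_of_mat (W v)) k)"
    by (simp add: mexp_def Ad_exp_term_def ad_iter_wedge mpow_minus scaleR_matrix_vector_assoc[symmetric]
        linear_scale[OF linear_wedge] endo_of_mat_scaleR)
  thus ?thesis using exp_conj_eq_Ad_exp_series[of 1] by simp
qed

lemma left_invariant_error_dynamics:
  fixes X Xb :: "real \<Rightarrow> real^'m^'m" and \<zeta> :: "real \<Rightarrow> real^'n"
  assumes XG: "\<And>s. X s \<in> G"
    and dX: "(X has_vector_derivative (X t ** W L + W R ** X t)) (at t)"
    and dXb: "(Xb has_vector_derivative (Xb t ** W Lb + W Rb ** Xb t)) (at t)"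
    and eta: "\<And>s. matrix_inv (X s) ** Xb s = mexp (W (\<zeta> s))"
    and dz: "(\<zeta> has_vector_derivative z') (at t)"
  shows "dexp_series W (\<zeta> t) *v z' = Lb - mexp (- ad_mat W (\<zeta> t)) *v (L + Ad_mat W (matrix_inv (X t)) *v (R - Rb))"
proof -
  let ?e = "\<lambda>A. endo_of_mat (W A)"
  have inv: "invertible (X s)" for s by (rule matrix_Lie_group_invertible[OF G XG])
  have "Xb s = X s ** (matrix_inv (X s) ** Xb s)" for s
    by (simp add: matrix_mul_assoc matrix_inv_mult_invertible(1)[OF inv])
  hence Xb: "endo_of_mat (Xb s) = endo_of_mat (X s) * exp (?e (\<zeta> s))" for s
    by (simp add: eta endo_of_mat_mult endo_of_mat_mexp)
  have dx: "((\<lambda>s. endo_of_mat (X s)) has_vector_derivative endo_of_mat (X t) * ?e L + ?e R * endo_of_mat (X t)) (at t)"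
    using has_vector_derivative_endo_of_mat[OF dX] by (simp add: endo_of_mat_simps)
  have dxb: "((\<lambda>s. endo_of_mat (Xb s)) has_vector_derivative endo_of_mat (Xb t) * ?e Lb + ?e Rb * endo_of_mat (Xb t)) (at t)"
    using has_vector_derivative_endo_of_mat[OF dXb] by (simp add: endo_of_mat_simps)
  have "?e (dexp_series W (\<zeta> t) *v z') = ?e Lb - exp (- ?e (\<zeta> t))
      * (?e L + endo_of_mat (matrix_inv (X t)) * (?e R - ?e Rb) * endo_of_mat (X t)) * exp (?e (\<zeta> t))"
    using dexp_left_error[OF dx dxb Xb bounded_linear.has_vector_derivative[OF bounded_linear_endo_of_mat_wedge dz]
        endo_of_mat_matrix_inv(1)[OF inv]]
    by (simp add: dexp_wedge)
  also have "endo_of_mat (matrix_inv (X t)) * (?e R - ?e Rb) * endo_of_mat (X t)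
      = ?e (Ad_mat W (matrix_inv (X t)) *v (R - Rb))"
    using wedge_Ad_mat[OF matrix_Lie_group_matrix_inv[OF G XG]] matrix_inv_matrix_inv[OF inv]
    by (simp add: endo_of_mat_simps linear_diff[OF linear_wedge])
  also have "?e L + ?e (Ad_mat W (matrix_inv (X t)) *v (R - Rb)) = ?e (L + Ad_mat W (matrix_inv (X t)) *v (R - Rb))"
    by (simp add: linear_add[OF linear_wedge] endo_of_mat_add)
  also have "exp (- ?e (\<zeta> t)) * ?e (L + Ad_mat W (matrix_inv (X t)) *v (R - Rb)) * exp (?e (\<zeta> t))
      = ?e (mexp (- ad_mat W (\<zeta> t)) *v (L + Ad_mat W (matrix_inv (X t)) *v (R - Rb)))"
    by (rule exp_conj_wedge)
  finally have "?e (dexp_series W (\<zeta> t) *v z')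
      = ?e (Lb - mexp (- ad_mat W (\<zeta> t)) *v (L + Ad_mat W (matrix_inv (X t)) *v (R - Rb)))"
    by (simp add: linear_diff[OF linear_wedge] endo_of_mat_diff)
  thus ?thesis by (rule injD[OF inj_wedge endo_of_mat_inject])
qed

end

end

theorem theorem1:
  fixes G :: "(real^'m^'m) set"
    and W :: "real^'n \<Rightarrow> real^'m^'m"
    and X Xb :: "real \<Rightarrow> real^'m^'m"
    and l r lb rb \<zeta> :: "real \<Rightarrow> real^'n"
  assumes G: "matrix_Lie_group G"
    and W: "wedge_map G W"
    and XG: "\<And>t. X t \<in> G" and XbG: "\<And>t. Xb t \<in> G"
    and dX: "\<And>t. (X has_vector_derivative (X t ** W (l t) + W (r t) ** X t)) (at t)"
    and dXb: "\<And>t. (Xb has_vector_derivative (Xb t ** W (lb t) + W (rb t) ** Xb t)) (at t)"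
    and eta: "\<And>t. matrix_inv (X t) ** Xb t = mexp (W (\<zeta> t))"
    and dz: "\<And>t. \<zeta> differentiable (at t)"
    and inv: "\<And>t. invertible (dexp_series W (\<zeta> t))"
  shows "\<forall>t. (\<zeta> has_vector_derivative
              (- (ad_mat W (lb t) *v \<zeta> t)
               + U_mat W (\<zeta> t) *v ((l t - lb t) + Ad_mat W (matrix_inv (X t)) *v (r t - rb t))))
              (at t)
          \<and> invertible (U_mat W (\<zeta> t))
          \<and> matrix_inv (U_mat W (\<zeta> t))
              = - (\<Sum>k. (1 / fact (k + 1)) *\<^sub>R mpow (ad_mat W (\<zeta> t)) k)"
proof
  fix t
  define M where "M = ad_mat W (\<zeta> t)"
  define w where "w = (l t - lb t) + Ad_mat W (matrix_inv (X t)) *v (r t - rb t)"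
  have U: "U_mat W (\<zeta> t) = - (mexp (- M) ** matrix_inv (mat_exprel (- M)))"
    by (simp add: U_mat_def M_def dexp_series_eq_mat_exprel)
  have inv_M: "invertible (mat_exprel (- M))"
    using inv[of t] by (simp add: M_def dexp_series_eq_mat_exprel)
  obtain z' where dz': "(\<zeta> has_vector_derivative z') (at t)"
    using dz vector_derivative_works by blast
  have "mat_exprel (- M) *v z' = lb t - mexp (- M) *v (lb t + w)"
    using left_invariant_error_dynamics[OF W G XG dX dXb eta dz']
    by (simp add: M_def w_def dexp_series_eq_mat_exprel)
  from mat_exprel_equation_solve[OF inv_M this]
  have "z' = - (ad_mat W (lb t) *v \<zeta> t) + U_mat W (\<zeta> t) *v w"
    by (simp add: U M_def ad_mat_antisym[OF W G, of "\<zeta> t" "lb t"])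
  with dz' invertible_mexp_mat_exprel[OF inv_M]
  show "(\<zeta> has_vector_derivative - (ad_mat W (lb t) *v \<zeta> t) + U_mat W (\<zeta> t) *v w) (at t)
      \<and> invertible (U_mat W (\<zeta> t))
      \<and> matrix_inv (U_mat W (\<zeta> t)) = - (\<Sum>k. (1 / fact (k + 1)) *\<^sub>R mpow (ad_mat W (\<zeta> t)) k)"
    unfolding U by (simp add: M_def mat_exprel_def)
qed

end
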